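(* Let $\epsilon\in(0,\frac12)$, $S\in\mathbb{R}^{m\times n}$, and $A\in\mathbb{R}^{n\times d}$ of full column rank, and let $SA=QR$ be a QR-decomposition of $SA$ (with $Q$ having orthonormal columns and $R\in\mathbb{R}^{d\times d}$ invertible). If $\|(AR^{-1})^\top AR^{-1}-I\|_{\mathrm{op}}\le\epsilon$, then $S$ is a $(1\pm\epsilon)$-subspace embedding of $\mathrm{col}(A)$, i.e., $(1-\epsilon)\|Ax\|_2\le\|SAx\|_2\le(1+\epsilon)\|Ax\|_2$ for all $x\in\mathbb{R}^d$.
   Context: $\|\cdot\|_{\mathrm{op}}$ is the spectral (operator) norm; $\mathrm{col}(A)$ is the column space of $A$. *)

theory Defs
  imports "HOL-Analysis.Analysis"
begin

definition op_norm :: "real^'c^'r \<Rightarrow> real" where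
  "op_norm M = onorm (\<lambda>x. M *v x)"

end

theory Submission
  imports Defs
begin

text \<open>With \<open>y = R x\<close> and \<open>B = A R\<^sup>-\<^sup>1\<close> we have \<open>A x = B y\<close> and, since \<open>Q\<close> is an isometry,
  \<open>\<parallel>S A x\<parallel> = \<parallel>Q R x\<parallel> = \<parallel>y\<parallel>\<close>. The quadratic form of \<open>B\<^sup>T B - I\<close> at \<open>y\<close> is \<open>\<parallel>B y\<parallel>\<^sup>2 - \<parallel>y\<parallel>\<^sup>2\<close>,
  so the operator norm bound gives \<open>|\<parallel>A x\<parallel>\<^sup>2 - \<parallel>S A x\<parallel>\<^sup>2| \<le> \<epsilon> \<parallel>S A x\<parallel>\<^sup>2\<close>. Taking square roots
  turns this into the two-sided bound; the upper bound needs \<open>\<epsilon> + \<epsilon>\<^sup>2 \<le> 1\<close>, guaranteed by \<open>\<epsilon> < 1/2\<close>.\<close>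

lemma matrix_inv_left:
  fixes R :: "'a::semiring_1^'n^'n"
  assumes "invertible R"
  shows "matrix_inv R ** R = mat 1"
proof -
  have "\<exists>R'. R ** R' = mat 1 \<and> R' ** R = mat 1"
    using assms by (simp add: invertible_def)
  then have "R ** matrix_inv R = mat 1 \<and> matrix_inv R ** R = mat 1"
    unfolding matrix_inv_def by (rule someI_ex)
  then show ?thesis by simp
qed

lemma norm_matrix_vector_mult_orthonormal:
  fixes Q :: "real^'d^'m"
  assumes "transpose Q ** Q = mat 1"
  shows "norm (Q *v z) = norm z"
proof -
  have "(Q *v z) \<bullet> (Q *v z) = ((transpose Q ** Q) *v z) \<bullet> z"
    by (metis dot_lmul_matrix inner_commute matrix_vector_mul_assoc transpose_matrix_vector)
  also have "\<dots> = z \<bullet> z"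
    using assms by simp
  finally show ?thesis
    by (simp add: norm_eq_sqrt_inner)
qed

lemma norm_matrix_vector_mult_le_op_norm:
  fixes M :: "real^'c^'r"
  shows "norm (M *v x) \<le> op_norm M * norm x"
  unfolding op_norm_def by (rule onorm) simp

lemma inner_gram_minus_id:
  fixes B :: "real^'d^'n"
  shows "y \<bullet> ((transpose B ** B - mat 1) *v y) = (norm (B *v y))\<^sup>2 - (norm y)\<^sup>2"
proof -
  have "y \<bullet> ((transpose B ** B) *v y) = (B *v y) \<bullet> (B *v y)"
    by (metis dot_lmul_matrix inner_commute matrix_vector_mul_assoc transpose_matrix_vector)
  then show ?thesis
    by (simp add: matrix_vector_mult_diff_rdistrib inner_diff_right power2_norm_eq_inner)
qed

lemma norm_sq_distortion_le_op_norm: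
  fixes B :: "real^'d^'n"
  shows "\<bar>(norm (B *v y))\<^sup>2 - (norm y)\<^sup>2\<bar> \<le> op_norm (transpose B ** B - mat 1) * (norm y)\<^sup>2"
proof -
  let ?M = "transpose B ** B - mat 1"
  have "\<bar>y \<bullet> (?M *v y)\<bar> \<le> norm y * norm (?M *v y)"
    by (rule Cauchy_Schwarz_ineq2)
  also have "\<dots> \<le> norm y * (op_norm ?M * norm y)"
    by (intro mult_left_mono norm_matrix_vector_mult_le_op_norm) simp
  finally show ?thesis
    by (simp add: inner_gram_minus_id power2_eq_square mult_ac)
qed

lemma le_of_sq_le_one_plus:
  fixes a b \<epsilon> :: real
  assumes "0 \<le> \<epsilon>" and "0 \<le> a" and "0 \<le> b" and "a\<^sup>2 \<le> (1 + \<epsilon>) * b\<^sup>2"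
  shows "(1 - \<epsilon>) * a \<le> b"
proof (cases "\<epsilon> \<le> 1")
  case True
  have factor: "(1 - \<epsilon>)\<^sup>2 * (1 + \<epsilon>) \<le> 1"
  proof -
    have "(1 - \<epsilon>)\<^sup>2 * (1 + \<epsilon>) = 1 - \<epsilon> * (1 + \<epsilon> * (1 - \<epsilon>))" by algebra
    moreover have "0 \<le> \<epsilon> * (1 + \<epsilon> * (1 - \<epsilon>))" using assms(1) True by simp
    ultimately show ?thesis by linarith
  qed
  have "((1 - \<epsilon>) * a)\<^sup>2 = (1 - \<epsilon>)\<^sup>2 * a\<^sup>2" by algebra
  also have "\<dots> \<le> (1 - \<epsilon>)\<^sup>2 * ((1 + \<epsilon>) * b\<^sup>2)"
    using assms(4) by (simp add: mult_left_mono)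
  also have "\<dots> \<le> b\<^sup>2"
    using mult_right_mono[OF factor, of "b\<^sup>2"] by (simp add: mult.assoc)
  finally show ?thesis using assms(3) by (rule power2_le_imp_le)
next
  case False
  then have "(1 - \<epsilon>) * a \<le> 0" using assms(2) by (simp add: mult_nonpos_nonneg)
  then show ?thesis using assms(3) by linarith
qed

lemma le_of_one_minus_sq_le:
  fixes a b \<epsilon> :: real
  assumes "0 \<le> \<epsilon>" and "\<epsilon> + \<epsilon>\<^sup>2 \<le> 1" and "0 \<le> a" and "(1 - \<epsilon>) * b\<^sup>2 \<le> a\<^sup>2"
  shows "b \<le> (1 + \<epsilon>) * a"
proof -
  have factor: "1 \<le> (1 + \<epsilon>)\<^sup>2 * (1 - \<epsilon>)"
  proof -
    have "(1 + \<epsilon>)\<^sup>2 * (1 - \<epsilon>) = 1 + \<epsilon> * (1 - (\<epsilon> + \<epsilon>\<^sup>2))" by algebra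
    moreover have "0 \<le> \<epsilon> * (1 - (\<epsilon> + \<epsilon>\<^sup>2))" using assms(1,2) by simp
    ultimately show ?thesis by linarith
  qed
  have "b\<^sup>2 \<le> (1 + \<epsilon>)\<^sup>2 * (1 - \<epsilon>) * b\<^sup>2"
    using mult_right_mono[OF factor, of "b\<^sup>2"] by simp
  also have "\<dots> \<le> (1 + \<epsilon>)\<^sup>2 * a\<^sup>2"
    using mult_left_mono[OF assms(4), of "(1 + \<epsilon>)\<^sup>2"] by (simp add: mult.assoc)
  also have "\<dots> = ((1 + \<epsilon>) * a)\<^sup>2" by algebra
  finally have "b\<^sup>2 \<le> ((1 + \<epsilon>) * a)\<^sup>2" .
  moreover have "0 \<le> (1 + \<epsilon>) * a" using assms(1,3) by simp
  ultimately show ?thesis by (rule power2_le_imp_le)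
qed

theorem mainTheorem4:
  fixes \<epsilon> :: real
    and S :: "real^'n^'m"
    and A :: "real^'d^'n"
    and Q :: "real^'d^'m"
    and R :: "real^'d^'d"
  assumes "0 < \<epsilon>" and "\<epsilon> < 1/2"
    and "rank A = CARD('d)"
    and "transpose Q ** Q = mat 1"
    and "invertible R"
    and "S ** A = Q ** R"
    and "op_norm (transpose (A ** matrix_inv R) ** (A ** matrix_inv R) - mat 1) \<le> \<epsilon>"
  shows "\<forall>x :: real^'d.
           (1 - \<epsilon>) * norm (A *v x) \<le> norm ((S ** A) *v x) \<and>
           norm ((S ** A) *v x) \<le> (1 + \<epsilon>) * norm (A *v x)"
proof
  fix x :: "real^'d"
  define B where "B = A ** matrix_inv R"
  define y where "y = R *v x"
  have SAx: "norm ((S ** A) *v x) = norm y"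
    using assms(6) norm_matrix_vector_mult_orthonormal[OF assms(4)]
    by (simp add: y_def matrix_vector_mul_assoc[symmetric])
  have "B ** R = A"
    using matrix_inv_left[OF assms(5)] by (metis B_def matrix_mul_assoc matrix_mul_rid)
  then have Ax: "A *v x = B *v y"
    by (simp add: y_def matrix_vector_mul_assoc)
  have "\<bar>(norm (A *v x))\<^sup>2 - (norm y)\<^sup>2\<bar> \<le> op_norm (transpose B ** B - mat 1) * (norm y)\<^sup>2"
    unfolding Ax by (rule norm_sq_distortion_le_op_norm)
  also have "\<dots> \<le> \<epsilon> * (norm y)\<^sup>2"
    using assms(7) unfolding B_def by (rule mult_right_mono) simp
  finally have "(norm (A *v x))\<^sup>2 \<le> (1 + \<epsilon>) * (norm y)\<^sup>2"
    and "(1 - \<epsilon>) * (norm y)\<^sup>2 \<le> (norm (A *v x))\<^sup>2"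
    by (simp_all add: abs_le_iff algebra_simps)
  moreover have "\<epsilon> + \<epsilon>\<^sup>2 \<le> 1"
  proof -
    have "\<epsilon> * \<epsilon> \<le> \<epsilon> * 1"
      using assms(1,2) by (intro mult_left_mono) simp_all
    then show ?thesis
      using assms(2) by (simp add: power2_eq_square)
  qed
  ultimately show "(1 - \<epsilon>) * norm (A *v x) \<le> norm ((S ** A) *v x) \<and>
      norm ((S ** A) *v x) \<le> (1 + \<epsilon>) * norm (A *v x)"
    unfolding SAx using assms(1) le_of_sq_le_one_plus le_of_one_minus_sq_le
    by (meson less_imp_le norm_ge_zero)
qed

end
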